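(* Let $K$ be a polyhedral cone with nonempty interior in a finite dimensional real Banach space $X$, and let $\mathrm{id}$ be the identity on $X$. Let $f:\operatorname{int}K\to\operatorname{int}K$ be order-preserving and homogeneous, and let $g=f+\mathrm{id}$. If $f$ has an eigenvector in $\operatorname{int}K$, then for every $x\in\operatorname{int}K$, $g^k(x)/\|g^k(x)\|$ converges as $k\to\infty$ to an eigenvector of $f$.
   Context: A closed cone is a closed convex set $K$ with $tK\subseteq K$ for $t>0$ and $K\cap(-K)=\{0\}$; it is polyhedral if it is the convex hull of finitely many rays from the origin. The order is $x\le_K y$ iff $y-x\in K$. Order-preserving: $x\le_K y\Rightarrow f(x)\le_K f(y)$; homogeneous: $f(tx)=tf(x)$ for $t>0$. An eigenvector of $f$ is $x$ with $f(x)=\mu x$ for some $\mu$. *)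

theory Defs
  imports "HOL-Analysis.Analysis"
begin

text \<open>Finite-dimensional real normed space (automatically Banach).\<close>
definition fin_dim_space :: "'a::real_normed_vector itself \<Rightarrow> bool" where
  "fin_dim_space _ \<longleftrightarrow> (\<exists>B::'a set. finite B \<and> span B = UNIV)"

definition closed_cone :: "'a::real_normed_vector set \<Rightarrow> bool" where
  "closed_cone K \<longleftrightarrow> closed K \<and> convex K \<and> (\<forall>t>0. (\<lambda>x. t *\<^sub>R x) ` K \<subseteq> K)
     \<and> K \<inter> uminus ` K = {0}"

definition polyhedral_cone :: "'a::real_normed_vector set \<Rightarrow> bool" where
  "polyhedral_cone K \<longleftrightarrow> closed_cone K \<and>
     (\<exists>S. finite S \<and> K = convex hull (\<Union>v\<in>S. {t *\<^sub>R v |t. t \<ge> 0}))"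

definition cone_le :: "'a::real_normed_vector set \<Rightarrow> 'a \<Rightarrow> 'a \<Rightarrow> bool" where
  "cone_le K x y \<longleftrightarrow> y - x \<in> K"

end

theory Submission
  imports Defs
begin

text \<open>
  Let \<open>f u = \<mu> u\<close> with \<open>u\<close> interior. Then \<open>\<mu> > 0\<close>, and \<open>g\<close> is a positive multiple of
  \<open>T = (f + id) / (1 + \<mu>)\<close>, which fixes \<open>u\<close>, is homogeneous and satisfies \<open>T y - T x \<ge> c (y - x)\<close>
  for \<open>x \<le> y\<close>, where \<open>c = 1 / (1 + \<mu>)\<close>. Comparison with \<open>u\<close> keeps every orbit of \<open>T\<close> in a ball of
  Thompson's metric, so (finite dimension, normality of \<open>K\<close>) an orbit has a limit point \<open>y\<close> in the
  interior. The ratios \<open>M(T^k z / T^l z) = inf {t. T^k z \<le> t T^l z}\<close> decrease along orbits, which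
  makes them constant along the orbit of \<open>y\<close>. If \<open>M(T y / y) = M > 1\<close>, the boundary vectors
  \<open>z_i = M T^i y - T^(i+1) y\<close> satisfy \<open>z_(i+1) \<ge> c z_i\<close>, so they lie in one proper face of \<open>K\<close>; this
  forces \<open>M(T^j y / y) \<ge> M^j\<close>, contradicting boundedness. So \<open>T y \<le> y\<close>, symmetrically \<open>y \<le> T y\<close>,
  and as \<open>T\<close> does not expand Thompson's metric the whole orbit converges to the fixed point \<open>y\<close>.
\<close>

lemma le_if_le_sq_mult_gt_one:
  fixes x y :: real
  assumes "\<And>R. 1 < R \<Longrightarrow> x \<le> R * R * y"
  shows "x \<le> y"
proof (rule field_le_mult_one_interval)
  fix z :: real assume "0 < z" "z < 1"
  have "1 < inverse (sqrt z)" using \<open>0 < z\<close> \<open>z < 1\<close> by (intro one_less_inverse) auto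
  then have "x \<le> inverse (sqrt z) * inverse (sqrt z) * y" by (rule assms)
  also have "inverse (sqrt z) * inverse (sqrt z) = inverse z"
    using \<open>0 < z\<close> by (simp flip: inverse_mult_distrib)
  finally have "x \<le> inverse z * y" .
  then have "z * x \<le> z * (inverse z * y)" using \<open>0 < z\<close> by (intro mult_left_mono) auto
  also have "z * (inverse z * y) = y" using \<open>0 < z\<close> by simp
  finally show "z * x \<le> y" .
qed

lemma funpow_fixed_point: "f x = x \<Longrightarrow> (f ^^ n) x = x"
  by (induction n) simp_all

lemma funpow_rescaled:
  fixes g :: "'a::real_vector \<Rightarrow> 'a"
  assumes maps: "\<And>y. y \<in> S \<Longrightarrow> inverse s *\<^sub>R g y \<in> S"
    and homogeneous: "\<And>y t. y \<in> S \<Longrightarrow> 0 < t \<Longrightarrow> g (t *\<^sub>R y) = t *\<^sub>R g y"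
    and "0 < s" "x \<in> S"
  shows "(g ^^ k) x = s ^ k *\<^sub>R ((\<lambda>y. inverse s *\<^sub>R g y) ^^ k) x"
proof (induction k)
  case (Suc k)
  let ?z = "((\<lambda>y. inverse s *\<^sub>R g y) ^^ k) x"
  have "?z \<in> S" by (induction k) (use maps \<open>x \<in> S\<close> in auto)
  have "(g ^^ Suc k) x = g (s ^ k *\<^sub>R ?z)" using Suc by simp
  also have "\<dots> = s ^ k *\<^sub>R g ?z" using homogeneous[OF \<open>?z \<in> S\<close>] \<open>0 < s\<close> by simp
  also have "\<dots> = s ^ Suc k *\<^sub>R (inverse s *\<^sub>R g ?z)" using \<open>0 < s\<close> by simp
  finally show ?case by simp
qed simp

section \<open>Compactness in finite dimension\<close>

lemma closed_if_compact_Int_cball: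
  fixes S :: "'a::real_normed_vector set"
  assumes "\<And>r. compact (S \<inter> cball 0 r)"
  shows "closed S"
proof (rule closed_sequential_limits[THEN iffD2], intro allI impI)
  fix x l assume x: "(\<forall>n. x n \<in> S) \<and> x \<longlonglongrightarrow> l"
  then have "bounded (range x)" using convergent_imp_bounded by blast
  then obtain r where "\<forall>n. norm (x n) \<le> r" by (auto simp: bounded_iff)
  then have "\<forall>n. x n \<in> S \<inter> cball 0 r" using x by simp
  then show "l \<in> S"
    using closed_sequentially[OF compact_imp_closed[OF assms]] x by blast
qed

lemma abs_mult_infdist_le_norm:
  assumes "subspace S" "w \<in> S"
  shows "\<bar>t\<bar> * infdist e S \<le> norm (w + t *\<^sub>R e)"
proof (cases "t = 0")
  case False
  have "- (w /\<^sub>R t) \<in> S" using assms by (simp add: subspace_neg subspace_scale)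
  then have "infdist e S \<le> dist e (- (w /\<^sub>R t))" by (rule infdist_le)
  moreover have "w + t *\<^sub>R e = t *\<^sub>R (e - - (w /\<^sub>R t))" using False by (simp add: algebra_simps)
  ultimately show ?thesis by (simp add: dist_norm mult_left_mono)
qed simp

lemma span_insert_Int_cball_subset:
  fixes B :: "'a::real_normed_vector set" and e :: 'a and r :: real
  assumes d: "0 < infdist e (span B)"
  defines "\<rho> \<equiv> r / infdist e (span B)"
  shows "span (insert e B) \<inter> cball 0 r
    \<subseteq> (\<lambda>(w, t). w + t *\<^sub>R e) ` ((span B \<inter> cball 0 (r + \<rho> * norm e)) \<times> {-\<rho>..\<rho>})"
proof
  fix v assume v: "v \<in> span (insert e B) \<inter> cball 0 r"
  then obtain t where w: "v - t *\<^sub>R e \<in> span B" using span_breakdown_eq by blast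
  have "\<bar>t\<bar> * infdist e (span B) \<le> norm v"
    using abs_mult_infdist_le_norm[OF subspace_span w, of t e] by simp
  then have t: "\<bar>t\<bar> \<le> \<rho>" using v d by (simp add: \<rho>_def pos_le_divide_eq)
  have "norm v \<le> r" using v by simp
  moreover have "norm (t *\<^sub>R e) \<le> \<rho> * norm e" using mult_right_mono[OF t norm_ge_zero] by simp
  ultimately have "norm (v - t *\<^sub>R e) \<le> r + \<rho> * norm e"
    using norm_triangle_ineq4[of v "t *\<^sub>R e"] by linarith
  then have "(v - t *\<^sub>R e, t) \<in> (span B \<inter> cball 0 (r + \<rho> * norm e)) \<times> {-\<rho>..\<rho>}"
    using w t by auto
  then show "v \<in> (\<lambda>(w, t). w + t *\<^sub>R e) ` ((span B \<inter> cball 0 (r + \<rho> * norm e)) \<times> {-\<rho>..\<rho>})"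
    by (auto intro!: image_eqI[where x = "(v - t *\<^sub>R e, t)"])
qed

lemma compact_span_Int_cball:
  fixes B :: "'a::real_normed_vector set"
  assumes "finite B"
  shows "compact (span B \<inter> cball 0 r)"
  using assms
proof (induction B arbitrary: r rule: finite_induct)
  case empty
  show ?case by (cases "r < 0") auto
next
  case (insert e B)
  show ?case
  proof (cases "e \<in> span B")
    case True
    then show ?thesis using insert.IH by (simp add: span_redundant)
  next
    case False
    let ?d = "infdist e (span B)"
    have "0 < ?d"
      using closed_if_compact_Int_cball[OF insert.IH] span_zero False
      by (intro infdist_pos_not_in_closed) auto
    define P where "P = (span B \<inter> cball 0 (r + r / ?d * norm e)) \<times> {- (r / ?d)..r / ?d}"
    have "span (insert e B) \<inter> cball 0 r = cball 0 r \<inter> (\<lambda>(w, t). w + t *\<^sub>R e) ` P"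
    proof
      show "span (insert e B) \<inter> cball 0 r \<subseteq> cball 0 r \<inter> (\<lambda>(w, t). w + t *\<^sub>R e) ` P"
        using span_insert_Int_cball_subset[OF \<open>0 < ?d\<close>, of r] unfolding P_def by blast
      show "cball 0 r \<inter> (\<lambda>(w, t). w + t *\<^sub>R e) ` P \<subseteq> span (insert e B) \<inter> cball 0 r"
      proof
        fix v assume v: "v \<in> cball 0 r \<inter> (\<lambda>(w, t). w + t *\<^sub>R e) ` P"
        then obtain w t where "w \<in> span B" "v = w + t *\<^sub>R e" by (auto simp: P_def)
        moreover have "span B \<subseteq> span (insert e B)" by (rule span_mono) blast
        ultimately show "v \<in> span (insert e B) \<inter> cball 0 r"
          using v by (metis IntD1 IntI span_add span_base span_scale insertI1 subsetD)
      qed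
    qed
    moreover have "compact ((\<lambda>(w, t). w + t *\<^sub>R e) ` P)"
      unfolding P_def
      by (intro compact_continuous_image compact_Times insert.IH compact_Icc)
        (auto intro!: continuous_intros simp: case_prod_unfold)
    ultimately show ?thesis by (simp add: closed_Int_compact)
  qed
qed

lemma compact_cball_fin_dim:
  fixes a :: "'a::real_normed_vector"
  assumes "fin_dim_space TYPE('a)"
  shows "compact (cball a r)"
proof -
  obtain B :: "'a set" where "finite B" "span B = UNIV"
    using assms unfolding fin_dim_space_def by blast
  then have "compact (cball 0 r :: 'a set)" using compact_span_Int_cball by fastforce
  then have "compact ((+) a ` cball 0 r)" by (rule compact_translation)
  then show ?thesis by (simp add: cball_translation)
qed

lemma fin_dim_bounded_convergent_subsequence:
  fixes s :: "nat \<Rightarrow> 'a::real_normed_vector"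
  assumes "fin_dim_space TYPE('a)" "bounded (range s)"
  obtains l r where "strict_mono r" "(s \<circ> r) \<longlonglongrightarrow> l"
proof -
  obtain R where "\<forall>n. norm (s n) \<le> R" using assms(2) by (auto simp: bounded_iff)
  then have "\<forall>n. s n \<in> cball 0 R" by simp
  then show ?thesis
    using seq_compactE[OF compact_imp_seq_compact[OF compact_cball_fin_dim[OF assms(1)]]] that
    by blast
qed

section \<open>Closed cones\<close>

lemma closed_cone_zero_interior_trivial:
  fixes K :: "'a::real_normed_vector set" and x :: 'a
  assumes "closed_cone K" "0 \<in> interior K"
  shows "x = 0"
proof -
  have all: "v \<in> K" for v :: 'a
  proof -
    have "(\<lambda>n. inverse (real (Suc n)) *\<^sub>R v) \<longlonglongrightarrow> 0 *\<^sub>R v"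
      by (intro tendsto_scaleR LIMSEQ_inverse_real_of_nat tendsto_const)
    then have "eventually (\<lambda>n. inverse (real (Suc n)) *\<^sub>R v \<in> interior K) sequentially"
      using topological_tendstoD[OF _ open_interior assms(2)] by simp
    then obtain N where "\<forall>n\<ge>N. inverse (real (Suc n)) *\<^sub>R v \<in> interior K"
      unfolding eventually_sequentially by blast
    then have "inverse (real (Suc N)) *\<^sub>R v \<in> K" using interior_subset by blast
    moreover have "(\<lambda>x. real (Suc N) *\<^sub>R x) ` K \<subseteq> K"
      using assms(1) unfolding closed_cone_def by (metis of_nat_0_less_iff zero_less_Suc)
    ultimately have "real (Suc N) *\<^sub>R (inverse (real (Suc N)) *\<^sub>R v) \<in> K" by blast
    then show ?thesis by simp
  qed
  have "x \<in> uminus ` K" by (rule rev_image_eqI[OF all[of "- x"]]) simp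
  then show ?thesis using all[of x] assms(1) unfolding closed_cone_def by blast
qed

locale proper_cone =
  fixes K :: "'a::real_normed_vector set"
  assumes fin_dim: "fin_dim_space TYPE('a)"
    and closed_cone: "closed_cone K"
    and zero_not_interior: "0 \<notin> interior K"
begin

lemma closed_K: "closed K"
  using closed_cone by (simp add: closed_cone_def)

lemma pointed: "K \<inter> uminus ` K = {0}"
  using closed_cone by (simp add: closed_cone_def)

lemma convex_cone_K: "convex_cone K"
proof -
  have "0 \<in> K" using pointed by blast
  moreover have "c *\<^sub>R x \<in> K" if "x \<in> K" "c > 0" for x c
    using closed_cone that by (auto simp: closed_cone_def)
  ultimately show ?thesis
    using closed_cone unfolding convex_cone_def conic_def closed_cone_def
    by (metis empty_iff order_le_less scaleR_zero_left)
qed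

lemma zero_mem: "0 \<in> K"
  using convex_cone_K by (rule convex_cone_contains_0)

lemma add_mem: "x \<in> K \<Longrightarrow> y \<in> K \<Longrightarrow> x + y \<in> K"
  using convex_cone_K by (rule convex_cone_add)

lemma scaleR_mem: "0 \<le> t \<Longrightarrow> x \<in> K \<Longrightarrow> t *\<^sub>R x \<in> K"
  using convex_cone_K by (rule convex_cone_scaleR)

lemma cone_antisym: "x \<in> K \<Longrightarrow> - x \<in> K \<Longrightarrow> x = 0"
  using pointed by (metis IntI image_eqI minus_minus singletonD)

lemma interior_nonzero: "a \<in> interior K \<Longrightarrow> a \<noteq> 0"
  using zero_not_interior by blast

lemma interior_mem: "a \<in> interior K \<Longrightarrow> a \<in> K"
  using interior_subset by blast

lemma interior_add_mem: "a \<in> interior K \<Longrightarrow> k \<in> K \<Longrightarrow> a + k \<in> interior K"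
proof -
  assume "a \<in> interior K" "k \<in> K"
  then have "a + k \<in> (+) k ` interior K" by (metis add.commute imageI)
  then have "a + k \<in> interior ((+) k ` K)" by (simp only: interior_translation)
  moreover have "(+) k ` K \<subseteq> K" using \<open>k \<in> K\<close> add_mem by blast
  ultimately show ?thesis using interior_mono by blast
qed

lemma interior_scaleR_mem: "0 < t \<Longrightarrow> a \<in> interior K \<Longrightarrow> t *\<^sub>R a \<in> interior K"
proof -
  assume "0 < t" "a \<in> interior K"
  have "(*\<^sub>R) t ` interior K \<subseteq> K"
    using \<open>0 < t\<close> by (auto intro!: scaleR_mem dest: interior_mem)
  moreover have "open ((*\<^sub>R) t ` interior K)"
    using \<open>0 < t\<close> by (intro open_scaling open_interior) simp
  ultimately have "(*\<^sub>R) t ` interior K \<subseteq> interior K" by (rule interior_maximal)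
  then show ?thesis using \<open>a \<in> interior K\<close> by blast
qed

lemma normal: "\<exists>C>0. \<forall>a b. a \<in> K \<longrightarrow> b - a \<in> K \<longrightarrow> norm a \<le> C * norm b"
proof (cases "K \<inter> sphere 0 1 = {}")
  case True
  have zero: "a = 0" if "a \<in> K" for a
  proof (rule ccontr)
    assume "a \<noteq> 0"
    then have "a /\<^sub>R norm a \<in> K \<inter> sphere 0 1" using that scaleR_mem by simp
    then show False using True by blast
  qed
  show ?thesis
  proof (intro exI[of _ 1] conjI allI impI)
    fix a b :: 'a assume "a \<in> K"
    then show "norm a \<le> 1 * norm b" using zero[OF \<open>a \<in> K\<close>] by simp
  qed simp
next
  case False
  let ?S = "K \<inter> sphere 0 1"
  have "?S = (K - ball 0 1) \<inter> cball 0 1" by auto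
  then have "compact ?S"
    using closed_Int_compact[OF closed_Diff[OF closed_K open_ball] compact_cball_fin_dim[OF fin_dim]]
    by simp
  moreover have "?S \<inter> uminus ` K = {}"
    using cone_antisym by fastforce
  ultimately have \<delta>: "setdist ?S (uminus ` K) > 0"
    using setdist_gt_0_compact_closed[OF _ closed_negations[OF closed_K]] False zero_mem by blast
  have "norm a \<le> inverse (setdist ?S (uminus ` K)) * norm b" if "a \<in> K" "b - a \<in> K" for a b
  proof (cases "a = 0")
    case False
    have "a /\<^sub>R norm a \<in> ?S" "- ((b - a) /\<^sub>R norm a) \<in> uminus ` K"
      using that False scaleR_mem by auto
    then have "setdist ?S (uminus ` K) \<le> dist (a /\<^sub>R norm a) (- ((b - a) /\<^sub>R norm a))"
      by (rule setdist_le_dist)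
    also have "\<dots> = norm (b /\<^sub>R norm a)"
      unfolding dist_norm by (rule arg_cong[of _ _ norm]) (simp add: algebra_simps)
    finally show ?thesis using \<delta> False by (simp add: field_simps)
  qed simp
  then show ?thesis using \<delta> positive_imp_inverse_positive by blast
qed

lemma interior_order_unit: "b \<in> interior K \<Longrightarrow> \<exists>t. t *\<^sub>R b - a \<in> K"
proof -
  assume "b \<in> interior K"
  then obtain e where "e > 0" "ball b e \<subseteq> K" using mem_interior by blast
  have pos: "0 < norm a + 1" using norm_ge_zero[of a] by linarith
  define s where "s = e / (norm a + 1)"
  have "s > 0" using \<open>e > 0\<close> pos by (simp add: s_def)
  have "norm (s *\<^sub>R a) = e * (norm a / (norm a + 1))" using \<open>e > 0\<close> by (simp add: s_def)
  also have "\<dots> < e * 1"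
    using \<open>e > 0\<close> pos by (intro mult_strict_left_mono) (simp_all add: divide_less_eq)
  finally have "b - s *\<^sub>R a \<in> ball b e" by (simp add: dist_norm)
  then have "b - s *\<^sub>R a \<in> K" using \<open>ball b e \<subseteq> K\<close> by blast
  then have "inverse s *\<^sub>R (b - s *\<^sub>R a) \<in> K" using \<open>s > 0\<close> by (simp add: scaleR_mem)
  moreover have "inverse s *\<^sub>R (b - s *\<^sub>R a) = inverse s *\<^sub>R b - a"
    using \<open>s > 0\<close> by (simp add: scaleR_diff_right)
  ultimately show ?thesis by auto
qed

lemma nonneg_if_scaleR_ge:
  assumes "a \<in> K" "b \<in> interior K" "t *\<^sub>R b - a \<in> K"
  shows "0 \<le> t"
proof (rule ccontr)
  assume "\<not> 0 \<le> t"
  have "t *\<^sub>R b \<in> K" using add_mem[OF assms(3,1)] by simp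
  moreover have "- (t *\<^sub>R b) \<in> K"
    using \<open>\<not> 0 \<le> t\<close> scaleR_mem[of "- t" b] interior_mem[OF assms(2)] by simp
  ultimately show False using cone_antisym interior_nonzero[OF assms(2)] \<open>\<not> 0 \<le> t\<close> by force
qed

text \<open>\<open>M_ratio a b\<close> is \<open>M(a/b) = inf {t. a \<le> t b}\<close> for the order of \<open>K\<close>; the infimum is only
  meaningful for \<open>b\<close> in the interior.\<close>
definition M_ratio :: "'a \<Rightarrow> 'a \<Rightarrow> real" where
  "M_ratio a b = Inf {t. t *\<^sub>R b - a \<in> K}"

lemma
  assumes "a \<in> K" "b \<in> interior K"
  shows M_ratio_mem: "M_ratio a b *\<^sub>R b - a \<in> K"
    and M_ratio_le_iff: "M_ratio a b \<le> t \<longleftrightarrow> t *\<^sub>R b - a \<in> K"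
    and M_ratio_nonneg: "0 \<le> M_ratio a b"
proof -
  let ?S = "{t. t *\<^sub>R b - a \<in> K}"
  have "?S \<noteq> {}" using interior_order_unit[OF assms(2)] by blast
  moreover have bdd: "bdd_below ?S"
    by (rule bdd_belowI[of _ 0]) (use nonneg_if_scaleR_ge[OF assms] in auto)
  moreover have "closed ((\<lambda>t. t *\<^sub>R b - a) -` K)"
    by (intro continuous_closed_vimage closed_K continuous_intros)
  then have "closed ?S" by (simp add: vimage_def)
  ultimately have "Inf ?S \<in> ?S" by (rule closed_contains_Inf)
  then show mem: "M_ratio a b *\<^sub>R b - a \<in> K" by (simp add: M_ratio_def)
  then show "0 \<le> M_ratio a b" using nonneg_if_scaleR_ge[OF assms] by blast
  show "M_ratio a b \<le> t \<longleftrightarrow> t *\<^sub>R b - a \<in> K"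
  proof
    assume "M_ratio a b \<le> t"
    then have "(t - M_ratio a b) *\<^sub>R b + (M_ratio a b *\<^sub>R b - a) \<in> K"
      using add_mem[OF scaleR_mem[of "t - M_ratio a b", OF _ interior_mem[OF assms(2)]] mem] by simp
    then show "t *\<^sub>R b - a \<in> K" by (simp add: algebra_simps)
  next
    assume "t *\<^sub>R b - a \<in> K"
    then show "M_ratio a b \<le> t" unfolding M_ratio_def using bdd by (intro cInf_lower) auto
  qed
qed

lemma M_ratio_pos: "a \<in> interior K \<Longrightarrow> b \<in> interior K \<Longrightarrow> 0 < M_ratio a b"
proof -
  assume a: "a \<in> interior K" and b: "b \<in> interior K"
  have "M_ratio a b \<noteq> 0"
  proof
    assume "M_ratio a b = 0"
    then have "- a \<in> K" using M_ratio_mem[OF interior_mem[OF a] b] by simp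
    then show False using cone_antisym interior_mem[OF a] interior_nonzero[OF a] by blast
  qed
  then show ?thesis using M_ratio_nonneg[OF interior_mem[OF a] b] by simp
qed

lemma M_ratio_not_interior:
  assumes "a \<in> K" "b \<in> interior K"
  shows "M_ratio a b *\<^sub>R b - a \<notin> interior K"
proof
  assume z: "M_ratio a b *\<^sub>R b - a \<in> interior K"
  then obtain s where s: "s *\<^sub>R (M_ratio a b *\<^sub>R b - a) - b \<in> K" using interior_order_unit by blast
  have "0 \<le> s" using nonneg_if_scaleR_ge[OF interior_mem[OF assms(2)] z s] .
  moreover have "s \<noteq> 0" using s cone_antisym interior_mem[OF assms(2)] interior_nonzero[OF assms(2)] by auto
  ultimately have "inverse s *\<^sub>R (s *\<^sub>R (M_ratio a b *\<^sub>R b - a) - b) \<in> K" using s scaleR_mem by simp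
  moreover have "inverse s *\<^sub>R (s *\<^sub>R (M_ratio a b *\<^sub>R b - a) - b)
      = (M_ratio a b - inverse s) *\<^sub>R b - a"
    using \<open>s \<noteq> 0\<close> by (simp add: scaleR_diff_right algebra_simps)
  ultimately have "(M_ratio a b - inverse s) *\<^sub>R b - a \<in> K" by simp
  then have "M_ratio a b \<le> M_ratio a b - inverse s" using M_ratio_le_iff[OF assms] by blast
  then show False using \<open>0 \<le> s\<close> \<open>s \<noteq> 0\<close> by simp
qed

lemma le_M_ratio_if_not_interior:
  assumes "a \<in> K" "b \<in> interior K" "t *\<^sub>R b - a \<notin> interior K"
  shows "t \<le> M_ratio a b"
proof (rule ccontr)
  assume "\<not> t \<le> M_ratio a b"
  then have "(t - M_ratio a b) *\<^sub>R b + (M_ratio a b *\<^sub>R b - a) \<in> interior K"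
    using interior_add_mem[OF interior_scaleR_mem[OF _ assms(2)] M_ratio_mem[OF assms(1,2)]] by simp
  then show False using assms(3) by (simp add: algebra_simps)
qed

lemma not_interior_if_le_scaled:
  assumes "z \<in> K" "z \<notin> interior K" "C *\<^sub>R z - a \<in> K"
  shows "a \<notin> interior K"
proof
  assume "a \<in> interior K"
  then have Cz: "C *\<^sub>R z \<in> interior K" using interior_add_mem[OF _ assms(3)] by force
  have "0 < C"
  proof (rule ccontr)
    assume "\<not> 0 < C"
    then have "- (C *\<^sub>R z) \<in> K" using scaleR_mem[of "- C" z] assms(1) by simp
    then show False using cone_antisym[OF interior_mem[OF Cz]] Cz interior_nonzero by blast
  qed
  then have "inverse C *\<^sub>R (C *\<^sub>R z) \<in> interior K" using \<open>0 < C\<close> interior_scaleR_mem[OF _ Cz, of "inverse C"] by simp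
  then show False using assms(2) \<open>0 < C\<close> by simp
qed

text \<open>\<open>thompson_close R a b\<close> means \<open>b \<le> R a\<close> and \<open>a \<le> R b\<close>, i.e. Thompson's metric \<open>d(a, b) \<le> ln R\<close>.\<close>
definition thompson_close :: "real \<Rightarrow> 'a \<Rightarrow> 'a \<Rightarrow> bool" where
  "thompson_close R a b \<longleftrightarrow> R *\<^sub>R a - b \<in> K \<and> R *\<^sub>R b - a \<in> K"

lemma thompson_close_sym: "thompson_close R a b \<longleftrightarrow> thompson_close R b a"
  unfolding thompson_close_def by blast

lemma thompson_close_trans:
  assumes "0 \<le> R" "0 \<le> S" "thompson_close R a b" "thompson_close S b c"
  shows "thompson_close (R * S) a c"
proof -
  have "S *\<^sub>R (R *\<^sub>R a - b) + (S *\<^sub>R b - c) \<in> K" "R *\<^sub>R (S *\<^sub>R c - b) + (R *\<^sub>R b - a) \<in> K"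
    using assms unfolding thompson_close_def by (auto intro!: add_mem scaleR_mem)
  then show ?thesis unfolding thompson_close_def by (simp add: algebra_simps)
qed

lemma thompson_close_exists:
  assumes "a \<in> interior K" "b \<in> interior K"
  shows "\<exists>R>0. thompson_close R a b"
proof -
  let ?R = "M_ratio a b + M_ratio b a"
  have "0 < M_ratio a b" "0 < M_ratio b a" using M_ratio_pos assms by blast+
  then have "M_ratio b a \<le> ?R" "M_ratio a b \<le> ?R" "0 < ?R" by simp_all
  then show ?thesis
    using M_ratio_le_iff[OF interior_mem] assms unfolding thompson_close_def by blast
qed

lemma M_ratio_le_if_thompson_close:
  "a \<in> K \<Longrightarrow> b \<in> interior K \<Longrightarrow> thompson_close R a b \<Longrightarrow> M_ratio a b \<le> R"
  by (simp add: M_ratio_le_iff thompson_close_def)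

lemma M_ratio_le_if_thompson_close_pairs:
  assumes "a \<in> K" "b \<in> interior K" "a' \<in> K" "b' \<in> interior K" "0 \<le> R"
    and "thompson_close R a a'" "thompson_close R b b'"
  shows "M_ratio a' b' \<le> R * R * M_ratio a b"
proof -
  let ?M = "M_ratio a b"
  have "(R * ?M) *\<^sub>R (R *\<^sub>R b' - b) + R *\<^sub>R (?M *\<^sub>R b - a) + (R *\<^sub>R a - a') \<in> K"
    using assms M_ratio_mem[OF assms(1,2)] M_ratio_nonneg[OF assms(1,2)]
    unfolding thompson_close_def by (intro add_mem scaleR_mem) auto
  then have "(R * R * ?M) *\<^sub>R b' - a' \<in> K" by (simp add: algebra_simps)
  then show ?thesis using M_ratio_le_iff[OF assms(3,4)] by blast
qed

lemma thompson_close_limit: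
  assumes "\<And>n. thompson_close R (s n) b" "s \<longlonglongrightarrow> a"
  shows "thompson_close R a b"
proof -
  have "(\<lambda>n. R *\<^sub>R s n - b) \<longlonglongrightarrow> R *\<^sub>R a - b" "(\<lambda>n. R *\<^sub>R b - s n) \<longlonglongrightarrow> R *\<^sub>R b - a"
    using assms(2) by (auto intro!: tendsto_intros)
  moreover have "\<forall>n. R *\<^sub>R s n - b \<in> K" "\<forall>n. R *\<^sub>R b - s n \<in> K"
    using assms(1) by (simp_all add: thompson_close_def)
  ultimately show ?thesis
    unfolding thompson_close_def by (metis closed_sequentially[OF closed_K])
qed

lemma interior_if_thompson_close:
  assumes "b \<in> interior K" "0 < R" "thompson_close R a b"
  shows "a \<in> interior K"
proof -
  have "b + (R *\<^sub>R a - b) \<in> interior K"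
    using assms unfolding thompson_close_def by (blast intro: interior_add_mem)
  then have "R *\<^sub>R a \<in> interior K" by simp
  then show ?thesis using interior_scaleR_mem[of "inverse R" "R *\<^sub>R a"] assms(2) by simp
qed

lemma eventually_thompson_close:
  assumes "b \<in> interior K" "s \<longlonglongrightarrow> b" "1 < R"
  shows "eventually (\<lambda>n. thompson_close R (s n) b) sequentially"
proof -
  have near: "eventually (\<lambda>n. b + \<mu> *\<^sub>R (s n - b) \<in> K) sequentially" for \<mu>
  proof -
    have "(\<lambda>n. b + \<mu> *\<^sub>R (s n - b)) \<longlonglongrightarrow> b + \<mu> *\<^sub>R (b - b)"
      using assms(2) by (intro tendsto_intros)
    then have "eventually (\<lambda>n. b + \<mu> *\<^sub>R (s n - b) \<in> interior K) sequentially"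
      using topological_tendstoD[OF _ open_interior assms(1)] by simp
    then show ?thesis by (rule eventually_mono) (rule interior_mem)
  qed
  have R: "(R - 1) * (R / (R - 1)) = R" "(R - 1) * (- 1 / (R - 1)) = - 1"
    using assms(3) by simp_all
  show ?thesis
    using eventually_conj[OF near[of "R / (R - 1)"] near[of "- 1 / (R - 1)"]]
  proof (rule eventually_mono)
    fix n assume n: "b + (R / (R - 1)) *\<^sub>R (s n - b) \<in> K \<and> b + (- 1 / (R - 1)) *\<^sub>R (s n - b) \<in> K"
    have "(R - 1) *\<^sub>R (b + (R / (R - 1)) *\<^sub>R (s n - b)) = R *\<^sub>R s n - b"
      "(R - 1) *\<^sub>R (b + (- 1 / (R - 1)) *\<^sub>R (s n - b)) = R *\<^sub>R b - s n"
      by (simp_all only: scaleR_add_right scaleR_scaleR R) (simp_all add: algebra_simps)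
    then show "thompson_close R (s n) b"
      using n scaleR_mem[of "R - 1"] assms(3) unfolding thompson_close_def by (metis less_eq_real_def diff_gt_0_iff_gt)
  qed
qed

lemma norm_diff_le_if_thompson_close:
  "\<exists>D>0. \<forall>R a b. 1 \<le> R \<longrightarrow> thompson_close R a b \<longrightarrow> norm (a - b) \<le> D * (R - 1) * norm b"
proof -
  obtain C where "C > 0" and C: "\<And>p q. p \<in> K \<Longrightarrow> q - p \<in> K \<Longrightarrow> norm p \<le> C * norm q"
    using normal by blast
  have "norm (a - b) \<le> (2 * C + 1) * (R - 1) * norm b" if "1 \<le> R" "thompson_close R a b" for R a b
  proof -
    define p where "p = inverse R *\<^sub>R (R *\<^sub>R a - b)"
    have "p \<in> K" using that scaleR_mem unfolding p_def thompson_close_def by simp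
    moreover have "(R - inverse R) *\<^sub>R b - p = R *\<^sub>R b - a"
      using that(1) by (simp add: p_def algebra_simps)
    ultimately have "norm p \<le> C * norm ((R - inverse R) *\<^sub>R b)"
      using C that(2) unfolding thompson_close_def by metis
    also have "R - inverse R \<le> 2 * (R - 1)" "0 \<le> R - inverse R"
      using that(1) mult_nonneg_nonneg[of "R - 1" "R - 1"] by (simp_all add: field_simps algebra_simps)
    then have "C * norm ((R - inverse R) *\<^sub>R b) \<le> C * (2 * (R - 1)) * norm b"
      using \<open>C > 0\<close> by (simp add: mult_right_mono)
    finally have "norm p \<le> C * (2 * (R - 1)) * norm b" .
    moreover have "a - b = p - (1 - inverse R) *\<^sub>R b"
      using that(1) by (simp add: p_def algebra_simps)
    then have "norm (a - b) \<le> norm p + norm ((1 - inverse R) *\<^sub>R b)"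
      by (simp only: norm_triangle_ineq4)
    moreover have "0 \<le> 1 - inverse R" "1 - inverse R \<le> R - 1"
      using that(1) mult_nonneg_nonneg[of "R - 1" "R - 1"] by (simp_all add: field_simps algebra_simps)
    then have "norm ((1 - inverse R) *\<^sub>R b) \<le> (R - 1) * norm b"
      by (simp add: mult_right_mono)
    ultimately have "norm (a - b) \<le> C * (2 * (R - 1)) * norm b + (R - 1) * norm b" by linarith
    then show ?thesis by (simp add: algebra_simps)
  qed
  moreover have "0 < 2 * C + 1" using \<open>C > 0\<close> by simp
  ultimately show ?thesis by blast
qed

lemma tendsto_if_eventually_thompson_close:
  assumes "\<And>R. 1 < R \<Longrightarrow> eventually (\<lambda>n. thompson_close R (s n) b) sequentially"
  shows "s \<longlonglongrightarrow> b"
proof (rule tendstoI)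
  fix e :: real assume "0 < e"
  obtain D where "D > 0"
    and D: "\<And>R a. 1 \<le> R \<Longrightarrow> thompson_close R a b \<Longrightarrow> norm (a - b) \<le> D * (R - 1) * norm b"
    using norm_diff_le_if_thompson_close by blast
  define N where "N = norm b + 1"
  have "0 < N" using norm_ge_zero[of b] by (simp add: N_def add_nonneg_pos)
  define R where "R = 1 + e / (2 * D * N)"
  have "1 < R" using \<open>0 < e\<close> \<open>D > 0\<close> \<open>0 < N\<close> by (simp add: R_def)
  have "D * (R - 1) * norm b \<le> D * (R - 1) * N"
    using \<open>D > 0\<close> \<open>1 < R\<close> by (intro mult_left_mono) (auto simp: N_def)
  also have "\<dots> = e / 2" using \<open>D > 0\<close> \<open>0 < N\<close> by (simp add: R_def field_simps)
  also have "\<dots> < e" using \<open>0 < e\<close> by simp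
  finally have small: "D * (R - 1) * norm b < e" .
  show "eventually (\<lambda>n. dist (s n) b < e) sequentially"
    using assms[OF \<open>1 < R\<close>]
  proof (rule eventually_mono)
    fix n assume "thompson_close R (s n) b"
    then have "norm (s n - b) \<le> D * (R - 1) * norm b" using D \<open>1 < R\<close> by simp
    then show "dist (s n) b < e" using small by (simp add: dist_norm)
  qed
qed

text \<open>Induction gives \<open>w j \<le> C z j\<close> for some \<open>C \<ge> 0\<close>; a vector below a boundary vector is not interior.\<close>
lemma not_interior_if_boundary_chain:
  assumes "0 < c" and z: "\<And>i. z i \<in> K" "\<And>i. z i \<notin> interior K" "\<And>i. z (Suc i) - c *\<^sub>R z i \<in> K"
    and w: "w 0 = z 0" "\<And>j. \<exists>\<alpha>\<ge>0. \<exists>\<beta>\<ge>0. w (Suc j) = \<alpha> *\<^sub>R w j + \<beta> *\<^sub>R z (Suc j)"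
  shows "w j \<notin> interior K"
proof -
  have "\<exists>C\<ge>0. C *\<^sub>R z j - w j \<in> K"
  proof (induction j)
    case 0
    show ?case using w(1) zero_mem by (intro exI[of _ 1]) simp
  next
    case (Suc j)
    then obtain C where "0 \<le> C" "C *\<^sub>R z j - w j \<in> K" by blast
    obtain \<alpha> \<beta> where "0 \<le> \<alpha>" "0 \<le> \<beta>" and wS: "w (Suc j) = \<alpha> *\<^sub>R w j + \<beta> *\<^sub>R z (Suc j)"
      using w(2) by blast
    define C' where "C' = \<alpha> * C / c"
    have "C' * c = \<alpha> * C" using \<open>0 < c\<close> by (simp add: C'_def)
    then have "C' *\<^sub>R (z (Suc j) - c *\<^sub>R z j) = C' *\<^sub>R z (Suc j) - (\<alpha> * C) *\<^sub>R z j"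
      by (simp only: scaleR_diff_right scaleR_scaleR)
    then have "C' *\<^sub>R (z (Suc j) - c *\<^sub>R z j) + \<alpha> *\<^sub>R (C *\<^sub>R z j - w j)
        = (C' + \<beta>) *\<^sub>R z (Suc j) - w (Suc j)"
      by (simp add: wS algebra_simps)
    moreover have "C' *\<^sub>R (z (Suc j) - c *\<^sub>R z j) + \<alpha> *\<^sub>R (C *\<^sub>R z j - w j) \<in> K"
      using \<open>0 \<le> C\<close> \<open>0 \<le> \<alpha>\<close> \<open>0 < c\<close> \<open>C *\<^sub>R z j - w j \<in> K\<close> z(3)
      by (intro add_mem scaleR_mem) (auto simp: C'_def)
    moreover have "0 \<le> C' + \<beta>" using \<open>0 \<le> C\<close> \<open>0 \<le> \<alpha>\<close> \<open>0 < c\<close> \<open>0 \<le> \<beta>\<close> by (simp add: C'_def)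
    ultimately show ?case by auto
  qed
  then show ?thesis using not_interior_if_le_scaled z by blast
qed

end

section \<open>Maps dominating a multiple of the identity\<close>

locale dominating_map = proper_cone K for K :: "'a::real_normed_vector set" +
  fixes T :: "'a \<Rightarrow> 'a" and c :: real
  assumes c_pos: "0 < c"
    and maps_interior: "x \<in> interior K \<Longrightarrow> T x \<in> interior K"
    and homogeneous: "x \<in> interior K \<Longrightarrow> 0 < t \<Longrightarrow> T (t *\<^sub>R x) = t *\<^sub>R T x"
    and dominates: "x \<in> interior K \<Longrightarrow> y \<in> interior K \<Longrightarrow> y - x \<in> K \<Longrightarrow> T y - T x - c *\<^sub>R (y - x) \<in> K"
begin

lemma funpow_interior: "x \<in> interior K \<Longrightarrow> (T ^^ n) x \<in> interior K"
  by (induction n) (auto intro: maps_interior)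

lemma order_preserving: "x \<in> interior K \<Longrightarrow> y \<in> interior K \<Longrightarrow> y - x \<in> K \<Longrightarrow> T y - T x \<in> K"
  using add_mem[OF dominates scaleR_mem[OF less_imp_le[OF c_pos]]] by force

lemma dominates_scaled:
  assumes "a \<in> interior K" "b \<in> interior K" "0 < R" "R *\<^sub>R b - a \<in> K"
  shows "(R *\<^sub>R T b - T a) - c *\<^sub>R (R *\<^sub>R b - a) \<in> K"
  using dominates[OF assms(1) interior_scaleR_mem[OF assms(3,2)] assms(4)] homogeneous[OF assms(2,3)]
  by simp

lemma thompson_close_image:
  assumes "a \<in> interior K" "b \<in> interior K" "0 < R" "thompson_close R a b"
  shows "thompson_close R (T a) (T b)"
proof -
  have "T (R *\<^sub>R a) - T b \<in> K" "T (R *\<^sub>R b) - T a \<in> K"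
    using assms interior_scaleR_mem unfolding thompson_close_def by (auto intro: order_preserving)
  then show ?thesis using assms(1-3) homogeneous by (simp add: thompson_close_def)
qed

lemma thompson_close_funpow:
  assumes "a \<in> interior K" "b \<in> interior K" "0 < R" "thompson_close R a b"
  shows "thompson_close R ((T ^^ n) a) ((T ^^ n) b)"
  by (induction n) (use assms funpow_interior thompson_close_image in auto)

lemma M_ratio_image_le:
  assumes "a \<in> interior K" "b \<in> interior K"
  shows "M_ratio (T a) (T b) \<le> M_ratio a b"
proof -
  let ?M = "M_ratio a b"
  have "0 < ?M" using M_ratio_pos assms by blast
  have "T (?M *\<^sub>R b) - T a \<in> K"
    using order_preserving[OF assms(1) interior_scaleR_mem[OF \<open>0 < ?M\<close> assms(2)]] M_ratio_mem assms
    by (simp add: interior_mem)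
  then show ?thesis
    using homogeneous[OF assms(2) \<open>0 < ?M\<close>] M_ratio_le_iff[OF interior_mem] maps_interior assms
    by simp
qed

lemma M_ratio_funpow_le_if_thompson_close:
  assumes "a \<in> interior K" "b \<in> interior K" "0 < R" "thompson_close R a b"
  shows "M_ratio ((T ^^ k) b) ((T ^^ l) b) \<le> R * R * M_ratio ((T ^^ k) a) ((T ^^ l) a)"
  using assms funpow_interior thompson_close_funpow
  by (intro M_ratio_le_if_thompson_close_pairs) (auto simp: interior_mem)

lemma M_ratio_orbit_convergent:
  assumes x: "x \<in> interior K"
  obtains L where "(\<lambda>m. M_ratio ((T ^^ k) ((T ^^ m) x)) ((T ^^ l) ((T ^^ m) x))) \<longlonglongrightarrow> L"
proof -
  define s where "s m = M_ratio ((T ^^ k) ((T ^^ m) x)) ((T ^^ l) ((T ^^ m) x))" for m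
  have "decseq s"
  proof (rule decseq_SucI)
    fix m
    have shift: "(T ^^ j) ((T ^^ Suc m) x) = T ((T ^^ j) ((T ^^ m) x))" for j
      by (induction j) simp_all
    show "s (Suc m) \<le> s m"
      unfolding s_def shift using M_ratio_image_le funpow_interior x by simp
  qed
  moreover have "\<forall>m. 0 \<le> s m"
    using M_ratio_nonneg funpow_interior x by (simp add: s_def interior_mem)
  ultimately obtain L where "s \<longlonglongrightarrow> L" by (rule decseq_convergent)
  then show ?thesis using that unfolding s_def by blast
qed

text \<open>Both sides equal the limit of the decreasing ratios along the orbit of \<open>x\<close>: for large \<open>n\<close>
  the orbit of \<open>(T ^^ r n) x\<close> is \<open>R\<close>-close to that of \<open>y\<close>, which changes ratios by a factor at most
  \<open>R * R\<close>, and \<open>R > 1\<close> is arbitrary.\<close>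
lemma M_ratio_constant_at_limit_point:
  assumes x: "x \<in> interior K" and y: "y \<in> interior K"
    and r: "strict_mono r" "(\<lambda>n. (T ^^ r n) x) \<longlonglongrightarrow> y"
  shows "M_ratio ((T ^^ k) ((T ^^ i) y)) ((T ^^ l) ((T ^^ i) y)) = M_ratio ((T ^^ k) y) ((T ^^ l) y)"
proof -
  define s where "s m = M_ratio ((T ^^ k) ((T ^^ m) x)) ((T ^^ l) ((T ^^ m) x))" for m
  obtain L where "s \<longlonglongrightarrow> L" using M_ratio_orbit_convergent[OF x, of k l] unfolding s_def by blast
  have "M_ratio ((T ^^ k) ((T ^^ i) y)) ((T ^^ l) ((T ^^ i) y)) = L" for i
  proof -
    let ?P = "M_ratio ((T ^^ k) ((T ^^ i) y)) ((T ^^ l) ((T ^^ i) y))"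
    have "strict_mono (\<lambda>n. i + r n)" using r(1) by (simp add: strict_mono_def)
    then have lim: "(\<lambda>n. R * R * s (i + r n)) \<longlonglongrightarrow> R * R * L" for R
      using LIMSEQ_subseq_LIMSEQ[OF \<open>s \<longlonglongrightarrow> L\<close>] by (intro tendsto_mult_left) (simp add: o_def)
    have "?P \<le> R * R * L \<and> L \<le> R * R * ?P" if "1 < R" for R
    proof -
      have "eventually (\<lambda>n. ?P \<le> R * R * s (i + r n) \<and> s (i + r n) \<le> R * R * ?P) sequentially"
        using eventually_thompson_close[OF y r(2) \<open>1 < R\<close>]
      proof (rule eventually_mono)
        fix n assume "thompson_close R ((T ^^ r n) x) y"
        then have "thompson_close R ((T ^^ (i + r n)) x) ((T ^^ i) y)"
          using thompson_close_funpow[of _ y R i] funpow_interior x y \<open>1 < R\<close> by (simp add: funpow_add)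
        then show "?P \<le> R * R * s (i + r n) \<and> s (i + r n) \<le> R * R * ?P"
          using M_ratio_funpow_le_if_thompson_close funpow_interior x y \<open>1 < R\<close>
          by (auto simp: s_def thompson_close_sym)
      qed
      then have ev: "eventually (\<lambda>n. ?P \<le> R * R * s (i + r n)) sequentially"
        "eventually (\<lambda>n. s (i + r n) \<le> R * R * ?P) sequentially"
        by (auto elim: eventually_mono)
      have "(\<lambda>n. s (i + r n)) \<longlonglongrightarrow> L"
        using LIMSEQ_subseq_LIMSEQ[OF \<open>s \<longlonglongrightarrow> L\<close> \<open>strict_mono (\<lambda>n. i + r n)\<close>] by (simp add: o_def)
      then show ?thesis
        using tendsto_lowerbound[OF lim[of R] ev(1)] tendsto_upperbound[OF _ ev(2)] by simp
    qed
    then show "?P = L" by (auto intro: order.antisym le_if_le_sq_mult_gt_one)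
  qed
  from this[of i] this[of 0] show ?thesis by simp
qed

lemma M_ratio_step_le_one_forward:
  assumes y: "y \<in> interior K"
    and const: "\<And>i. M_ratio (T ((T ^^ i) y)) ((T ^^ i) y) = M_ratio (T y) y"
    and bdd: "\<And>j. M_ratio ((T ^^ j) y) y \<le> B"
  shows "M_ratio (T y) y \<le> 1"
proof (rule ccontr)
  let ?M = "M_ratio (T y) y" and ?b = "\<lambda>i. (T ^^ i) y"
  assume "\<not> ?M \<le> 1"
  define z where "z i = ?M *\<^sub>R ?b i - ?b (Suc i)" for i
  define w where "w j = ?M ^ Suc j *\<^sub>R y - ?b (Suc j)" for j
  have b: "?b i \<in> interior K" for i using funpow_interior y by blast
  have zK: "z i \<in> K" for i
    using M_ratio_mem[OF interior_mem[OF maps_interior[OF b[of i]]] b[of i]] const[of i]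
    by (simp add: z_def)
  have z_boundary: "z i \<notin> interior K" for i
    using M_ratio_not_interior[OF interior_mem[OF maps_interior[OF b[of i]]] b[of i]] const[of i]
    by (simp add: z_def)
  have z_chain: "z (Suc i) - c *\<^sub>R z i \<in> K" for i
    using dominates_scaled[OF b[of "Suc i"] b[of i] _ zK[of i, unfolded z_def]] \<open>\<not> ?M \<le> 1\<close>
    by (simp add: z_def)
  have "w (Suc j) = ?M *\<^sub>R w j + 1 *\<^sub>R z (Suc j)" for j
    by (simp add: w_def z_def algebra_simps)
  then have "\<exists>\<alpha>\<ge>0. \<exists>\<beta>\<ge>0. w (Suc j) = \<alpha> *\<^sub>R w j + \<beta> *\<^sub>R z (Suc j)" for j
    using \<open>\<not> ?M \<le> 1\<close> by (meson less_eq_real_def not_le zero_le_one order_trans)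
  then have w_boundary: "w j \<notin> interior K" for j
    using not_interior_if_boundary_chain[of c z w, OF c_pos zK z_boundary z_chain] by (simp add: w_def z_def)
  have "?M ^ Suc j \<le> M_ratio (?b (Suc j)) y" for j
    using w_boundary[of j] unfolding w_def by (rule le_M_ratio_if_not_interior[OF interior_mem[OF b] y])
  then have grow: "?M ^ Suc j \<le> B" for j using bdd order_trans by blast
  obtain n where "B < ?M ^ n" using real_arch_pow[of ?M B] \<open>\<not> ?M \<le> 1\<close> by auto
  moreover have "?M ^ n \<le> ?M ^ Suc n" using \<open>\<not> ?M \<le> 1\<close> by (intro power_increasing) auto
  ultimately show False using grow[of n] by linarith
qed

lemma M_ratio_step_le_one_backward:
  assumes y: "y \<in> interior K"
    and const: "\<And>i. M_ratio ((T ^^ i) y) (T ((T ^^ i) y)) = M_ratio y (T y)"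
    and bdd: "\<And>j. M_ratio y ((T ^^ j) y) \<le> B"
  shows "M_ratio y (T y) \<le> 1"
proof (rule ccontr)
  let ?M = "M_ratio y (T y)" and ?b = "\<lambda>i. (T ^^ i) y"
  assume "\<not> ?M \<le> 1"
  define z where "z i = ?M *\<^sub>R ?b (Suc i) - ?b i" for i
  define w where "w j = ?M ^ Suc j *\<^sub>R ?b (Suc j) - y" for j
  have b: "?b i \<in> interior K" for i using funpow_interior y by blast
  have zK: "z i \<in> K" for i
    using M_ratio_mem[OF interior_mem[OF b[of i]] maps_interior[OF b[of i]]] const[of i]
    by (simp add: z_def)
  have z_boundary: "z i \<notin> interior K" for i
    using M_ratio_not_interior[OF interior_mem[OF b[of i]] maps_interior[OF b[of i]]] const[of i]
    by (simp add: z_def)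
  have z_chain: "z (Suc i) - c *\<^sub>R z i \<in> K" for i
    using dominates_scaled[OF b[of i] b[of "Suc i"] _ zK[of i, unfolded z_def]] \<open>\<not> ?M \<le> 1\<close>
    by (simp add: z_def)
  have "w (Suc j) = 1 *\<^sub>R w j + ?M ^ Suc j *\<^sub>R z (Suc j)" for j
    by (simp add: w_def z_def algebra_simps)
  moreover have "0 \<le> ?M ^ Suc j" for j using \<open>\<not> ?M \<le> 1\<close> by simp
  ultimately have "\<exists>\<alpha>\<ge>0. \<exists>\<beta>\<ge>0. w (Suc j) = \<alpha> *\<^sub>R w j + \<beta> *\<^sub>R z (Suc j)" for j
    by (meson zero_le_one)
  then have w_boundary: "w j \<notin> interior K" for j
    using not_interior_if_boundary_chain[of c z w, OF c_pos zK z_boundary z_chain] by (simp add: w_def z_def)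
  have "?M ^ Suc j \<le> M_ratio y (?b (Suc j))" for j
    using w_boundary[of j] unfolding w_def by (rule le_M_ratio_if_not_interior[OF interior_mem[OF y] b])
  then have grow: "?M ^ Suc j \<le> B" for j using bdd order_trans by blast
  obtain n where "B < ?M ^ n" using real_arch_pow[of ?M B] \<open>\<not> ?M \<le> 1\<close> by auto
  moreover have "?M ^ n \<le> ?M ^ Suc n" using \<open>\<not> ?M \<le> 1\<close> by (intro power_increasing) auto
  ultimately show False using grow[of n] by linarith
qed

lemma fixed_point_if_limit_point:
  assumes u: "u \<in> interior K" "T u = u" and x: "x \<in> interior K" and y: "y \<in> interior K"
    and r: "strict_mono r" "(\<lambda>n. (T ^^ r n) x) \<longlonglongrightarrow> y"
  shows "T y = y"
proof -
  obtain R where "0 < R" "thompson_close R y u" using thompson_close_exists[OF y u(1)] by blast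
  have "thompson_close R ((T ^^ j) y) u" for j
    using thompson_close_funpow[OF y u(1) \<open>0 < R\<close> \<open>thompson_close R y u\<close>, of j]
      funpow_fixed_point[of T u j, OF u(2)] by simp
  moreover have "thompson_close R u y" using \<open>thompson_close R y u\<close> thompson_close_sym by blast
  ultimately have "thompson_close (R * R) ((T ^^ j) y) y" for j
    using thompson_close_trans[of R R "(T ^^ j) y" u y] \<open>0 < R\<close> by simp
  then have "M_ratio ((T ^^ j) y) y \<le> R * R" "M_ratio y ((T ^^ j) y) \<le> R * R" for j
    using M_ratio_le_if_thompson_close funpow_interior y thompson_close_sym
    by (simp_all add: interior_mem)
  moreover have "M_ratio (T ((T ^^ i) y)) ((T ^^ i) y) = M_ratio (T y) y"
    "M_ratio ((T ^^ i) y) (T ((T ^^ i) y)) = M_ratio y (T y)" for i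
    using M_ratio_constant_at_limit_point[OF x y r, of 1 i 0]
      M_ratio_constant_at_limit_point[OF x y r, of 0 i 1] by simp_all
  ultimately have "M_ratio (T y) y \<le> 1" "M_ratio y (T y) \<le> 1"
    using M_ratio_step_le_one_forward[OF y] M_ratio_step_le_one_backward[OF y] by blast+
  then have "y - T y \<in> K" "T y - y \<in> K"
    using M_ratio_le_iff interior_mem maps_interior y by simp_all
  then show "T y = y" using cone_antisym by fastforce
qed

lemma orbit_tendsto_if_limit_point_fixed:
  assumes y: "y \<in> interior K" "T y = y" and x: "x \<in> interior K"
    and r: "strict_mono r" "(\<lambda>n. (T ^^ r n) x) \<longlonglongrightarrow> y"
  shows "(\<lambda>n. (T ^^ n) x) \<longlonglongrightarrow> y"
proof (rule tendsto_if_eventually_thompson_close)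
  fix R :: real assume "1 < R"
  obtain N where "\<forall>n\<ge>N. thompson_close R ((T ^^ r n) x) y"
    using eventually_thompson_close[OF y(1) r(2) \<open>1 < R\<close>] unfolding eventually_sequentially by blast
  then have close: "thompson_close R ((T ^^ r N) x) y" by simp
  have "thompson_close R ((T ^^ n) x) y" if "r N \<le> n" for n
  proof -
    have "(T ^^ (n - r N)) ((T ^^ r N) x) = (T ^^ n) x"
      using that by (metis comp_apply funpow_add le_add_diff_inverse2)
    then show ?thesis
      using thompson_close_funpow[OF funpow_interior[OF x] y(1) _ close, of "n - r N"] \<open>1 < R\<close>
        funpow_fixed_point[of T y "n - r N", OF y(2)] by simp
  qed
  then show "eventually (\<lambda>n. thompson_close R ((T ^^ n) x) y) sequentially"
    using eventually_sequentially by blast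
qed

lemma orbit_has_interior_limit_point:
  assumes u: "u \<in> interior K" "T u = u" and x: "x \<in> interior K"
  obtains r y where "strict_mono r" "(\<lambda>n. (T ^^ r n) x) \<longlonglongrightarrow> y" "y \<in> interior K"
proof -
  obtain R where "0 < R" "thompson_close R x u" using thompson_close_exists[OF x u(1)] by blast
  then have close: "thompson_close R ((T ^^ n) x) u" for n
    using thompson_close_funpow[OF x u(1) \<open>0 < R\<close> \<open>thompson_close R x u\<close>, of n]
      funpow_fixed_point[of T u n, OF u(2)] by simp
  obtain C where C: "\<And>a b. a \<in> K \<Longrightarrow> b - a \<in> K \<Longrightarrow> norm a \<le> C * norm b"
    using normal by blast
  have "norm ((T ^^ n) x) \<le> C * norm (R *\<^sub>R u)" for n
    using C[of "(T ^^ n) x" "R *\<^sub>R u"] close[of n] funpow_interior[OF x, of n]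
    by (simp add: thompson_close_def interior_mem)
  then have "bounded (range (\<lambda>n. (T ^^ n) x))" by (auto simp: bounded_iff)
  then obtain y r where "strict_mono r" "((\<lambda>n. (T ^^ n) x) \<circ> r) \<longlonglongrightarrow> y"
    by (rule fin_dim_bounded_convergent_subsequence[OF fin_dim])
  then have r: "strict_mono r" "(\<lambda>n. (T ^^ r n) x) \<longlonglongrightarrow> y" by (simp_all add: o_def)
  moreover have "y \<in> interior K"
    using interior_if_thompson_close[OF u(1) \<open>0 < R\<close> thompson_close_limit[OF close r(2)]] .
  ultimately show ?thesis using that by blast
qed

theorem orbit_tendsto_fixed_point:
  assumes "u \<in> interior K" "T u = u" "x \<in> interior K"
  obtains y where "y \<in> interior K" "T y = y" "(\<lambda>n. (T ^^ n) x) \<longlonglongrightarrow> y"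
proof -
  obtain r y where r: "strict_mono r" "(\<lambda>n. (T ^^ r n) x) \<longlonglongrightarrow> y" and y: "y \<in> interior K"
    using orbit_has_interior_limit_point[OF assms] .
  have "T y = y" using fixed_point_if_limit_point[OF assms y r] .
  then show ?thesis using that y orbit_tendsto_if_limit_point_fixed[OF y _ assms(3) r] by blast
qed

end

context proper_cone
begin

lemma eigenvalue_pos:
  assumes "u \<in> interior K" "f u \<in> interior K" "f u = \<mu> *\<^sub>R u"
  shows "0 < \<mu>"
proof (rule ccontr)
  assume "\<not> 0 < \<mu>"
  then have "- f u \<in> K" using assms(1,3) scaleR_mem[of "- \<mu>" u] interior_mem by simp
  then show False using cone_antisym[OF interior_mem[OF assms(2)]] interior_nonzero[OF assms(2)] by blast
qed

lemma dominating_map_rescaled_sum: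
  assumes maps: "\<And>x. x \<in> interior K \<Longrightarrow> f x \<in> interior K"
    and mono: "\<And>x y. x \<in> interior K \<Longrightarrow> y \<in> interior K \<Longrightarrow> y - x \<in> K \<Longrightarrow> f y - f x \<in> K"
    and homogeneous: "\<And>x t. x \<in> interior K \<Longrightarrow> 0 < t \<Longrightarrow> f (t *\<^sub>R x) = t *\<^sub>R f x"
    and "0 < s"
  shows "dominating_map K (\<lambda>y. inverse s *\<^sub>R (f y + y)) (inverse s)"
proof (intro dominating_map.intro dominating_map_axioms.intro)
  show "proper_cone K" by (rule proper_cone_axioms)
  show "0 < inverse s" using \<open>0 < s\<close> by simp
next
  fix x assume "x \<in> interior K"
  then show "inverse s *\<^sub>R (f x + x) \<in> interior K"
    using maps \<open>0 < s\<close> interior_add_mem[OF maps interior_mem] interior_scaleR_mem by simp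
next
  fix x :: 'a and t :: real assume "x \<in> interior K" "0 < t"
  then show "inverse s *\<^sub>R (f (t *\<^sub>R x) + t *\<^sub>R x) = t *\<^sub>R (inverse s *\<^sub>R (f x + x))"
    using homogeneous by (simp add: algebra_simps)
next
  fix x y assume "x \<in> interior K" "y \<in> interior K" "y - x \<in> K"
  then have "inverse s *\<^sub>R (f y - f x) \<in> K" using mono \<open>0 < s\<close> scaleR_mem by simp
  then show "inverse s *\<^sub>R (f y + y) - inverse s *\<^sub>R (f x + x) - inverse s *\<^sub>R (y - x) \<in> K"
    by (simp add: algebra_simps)
qed

lemma sgn_iterates_tendsto_eigenvector:
  assumes f_interior: "\<And>x. x \<in> interior K \<Longrightarrow> f x \<in> interior K"
    and f_mono: "\<And>x y. x \<in> interior K \<Longrightarrow> y \<in> interior K \<Longrightarrow> y - x \<in> K \<Longrightarrow> f y - f x \<in> K"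
    and f_homogeneous: "\<And>x t. x \<in> interior K \<Longrightarrow> 0 < t \<Longrightarrow> f (t *\<^sub>R x) = t *\<^sub>R f x"
    and u: "u \<in> interior K" "f u = \<mu> *\<^sub>R u" and x: "x \<in> interior K"
  obtains v where "v \<in> interior K" "f v = \<mu> *\<^sub>R v" "(\<lambda>k. sgn (((\<lambda>y. f y + y) ^^ k) x)) \<longlonglongrightarrow> v"
proof -
  have "0 < \<mu>" using eigenvalue_pos[of u f \<mu>, OF u(1) f_interior[OF u(1)] u(2)] .
  define T where "T y = inverse (1 + \<mu>) *\<^sub>R (f y + y)" for y
  interpret dominating_map K T "inverse (1 + \<mu>)"
    unfolding T_def using \<open>0 < \<mu>\<close>
    by (intro dominating_map_rescaled_sum[OF f_interior f_mono f_homogeneous]) auto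
  have "f u + u = (1 + \<mu>) *\<^sub>R u" using u(2) by (simp add: algebra_simps)
  then have "T u = u" using \<open>0 < \<mu>\<close> by (simp add: T_def)
  then obtain y where y: "y \<in> interior K" "T y = y" "(\<lambda>k. (T ^^ k) x) \<longlonglongrightarrow> y"
    using orbit_tendsto_fixed_point[OF u(1) _ x] by blast
  have "sgn (((\<lambda>y. f y + y) ^^ k) x) = sgn ((T ^^ k) x)" for k
  proof -
    have "((\<lambda>y. f y + y) ^^ k) x = (1 + \<mu>) ^ k *\<^sub>R (T ^^ k) x"
      unfolding T_def using f_homogeneous maps_interior[unfolded T_def] \<open>0 < \<mu>\<close> x
      by (intro funpow_rescaled[where S = "interior K"]) (auto simp: algebra_simps)
    moreover have "sgn (1 + \<mu>) = 1" using \<open>0 < \<mu>\<close> by simp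
    ultimately show ?thesis by (simp add: sgn_scaleR)
  qed
  moreover have "(\<lambda>k. sgn ((T ^^ k) x)) \<longlonglongrightarrow> sgn y"
    using y(3) interior_nonzero[OF y(1)] by (rule tendsto_sgn)
  moreover have "sgn y \<in> interior K"
    using interior_scaleR_mem[of "inverse (norm y)" y] y(1) interior_nonzero[OF y(1)]
    by (simp add: sgn_div_norm)
  moreover have "f (sgn y) = \<mu> *\<^sub>R sgn y"
  proof -
    have "(1 + \<mu>) *\<^sub>R T y = (1 + \<mu>) *\<^sub>R y" using y(2) by simp
    then have "f y + y = (1 + \<mu>) *\<^sub>R y" using \<open>0 < \<mu>\<close> by (simp add: T_def)
    then have "f y = \<mu> *\<^sub>R y" by (simp add: algebra_simps)
    then show ?thesis
      using f_homogeneous y(1) interior_nonzero[OF y(1)] by (simp add: sgn_div_norm mult.commute)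
  qed
  ultimately show ?thesis using that by simp
qed

end

theorem theorem6p3:
  fixes K :: "'a::real_normed_vector set" and f :: "'a \<Rightarrow> 'a"
  assumes fin: "fin_dim_space TYPE('a)"
    and poly: "polyhedral_cone K"
    and int_ne: "interior K \<noteq> {}"
    and maps: "\<forall>x\<in>interior K. f x \<in> interior K"
    and mono: "\<forall>x\<in>interior K. \<forall>y\<in>interior K. cone_le K x y \<longrightarrow> cone_le K (f x) (f y)"
    and homog: "\<forall>x\<in>interior K. \<forall>t>0. f (t *\<^sub>R x) = t *\<^sub>R f x"
    and eig: "\<exists>v\<in>interior K. \<exists>\<mu>. f v = \<mu> *\<^sub>R v"
  shows "\<forall>x\<in>interior K. \<exists>v\<in>interior K. (\<exists>\<mu>. f v = \<mu> *\<^sub>R v) \<and>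
           (\<lambda>k. ((\<lambda>y. f y + y) ^^ k) x /\<^sub>R norm (((\<lambda>y. f y + y) ^^ k) x)) \<longlonglongrightarrow> v"
proof (cases "0 \<in> interior K")
  case True
  then have trivial: "z = 0" for z :: 'a
    using poly closed_cone_zero_interior_trivial by (auto simp: polyhedral_cone_def)
  show ?thesis
  proof
    fix x :: 'a
    have seq: "(\<lambda>k. ((\<lambda>y. f y + y) ^^ k) x /\<^sub>R norm (((\<lambda>y. f y + y) ^^ k) x)) = (\<lambda>k. 0)"
      by (intro ext trivial)
    show "\<exists>v\<in>interior K. (\<exists>\<mu>. f v = \<mu> *\<^sub>R v) \<and>
           (\<lambda>k. ((\<lambda>y. f y + y) ^^ k) x /\<^sub>R norm (((\<lambda>y. f y + y) ^^ k) x)) \<longlonglongrightarrow> v"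
      unfolding seq using True trivial[of "f 0"] by (intro bexI[of _ 0] conjI exI[of _ 0]) simp_all
  qed
next
  case False
  interpret proper_cone K
    using fin poly False by unfold_locales (simp_all add: polyhedral_cone_def)
  obtain u \<mu> where u: "u \<in> interior K" "f u = \<mu> *\<^sub>R u" using eig by blast
  show ?thesis
  proof
    fix x assume "x \<in> interior K"
    obtain v where "v \<in> interior K" "f v = \<mu> *\<^sub>R v" "(\<lambda>k. sgn (((\<lambda>y. f y + y) ^^ k) x)) \<longlonglongrightarrow> v"
      by (rule sgn_iterates_tendsto_eigenvector[of f u \<mu> x, OF _ _ _ u \<open>x \<in> interior K\<close>])
        (use maps mono homog in \<open>auto simp: cone_le_def\<close>)
    then show "\<exists>v\<in>interior K. (\<exists>\<mu>. f v = \<mu> *\<^sub>R v) \<and>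
           (\<lambda>k. ((\<lambda>y. f y + y) ^^ k) x /\<^sub>R norm (((\<lambda>y. f y + y) ^^ k) x)) \<longlonglongrightarrow> v"
      unfolding sgn_div_norm[symmetric] by blast
  qed
qed

end
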